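(* Let $K$ be a compact Hausdorff space and $\phi:K\to K$ a continuous map. Suppose there is an uncountable subset $A\subset K$ such that $\phi|_A$ is injective and $\phi(A)\cap A=\emptyset$. Then the composition operator $T=C_\phi:C(K)\to C(K)$, $f\mapsto f\circ\phi$, has the property that for every $g\in\mathfrak B(K)$, the operator $T^*+M_g^*:C(K)^*\to C(K)^*$ does not have separable range.
   Context: $C(K)$ is the Banach space of continuous real-valued functions on $K$ with the sup norm, and $C(K)^*$ is identified with the space of finite regular signed Borel measures on $K$. $\mathfrak B(K)$ denotes the space of bounded real-valued Borel functions on $K$. For $g\in\mathfrak B(K)$, $M_g^*:C(K)^*\to C(K)^*$ is the operator sending a measure $\mu$ to the measure $g\,\mathrm d\mu$. $T^*$ denotes the Banach space adjoint of $T$. *)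

theory Defs
  imports "HOL-Analysis.Analysis"
begin

text \<open>A finite Borel measure on the (compact Hausdorff) space K = UNIV which is regular:
  outer regular by open sets and inner regular by compact sets on all Borel sets.\<close>
definition regular_measure :: "'a::topological_space measure \<Rightarrow> bool" where
  "regular_measure M \<longleftrightarrow> sets M = sets borel \<and> finite_measure M \<and>
     (\<forall>E\<in>sets borel.
        emeasure M E = (INF U\<in>{U. open U \<and> E \<subseteq> U}. emeasure M U) \<and>
        emeasure M E = (SUP C\<in>{C. compact C \<and> C \<subseteq> E}. emeasure M C))"

text \<open>The finite regular signed Borel measure M1 - M2 (as a set function; every finite regular
  signed Borel measure arises this way, e.g. via its Jordan decomposition).\<close>
definition signed_of :: "'a::topological_space measure \<Rightarrow> 'a measure \<Rightarrow> 'a set \<Rightarrow> real" where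
  "signed_of M1 M2 = (\<lambda>E. measure M1 E - measure M2 E)"

text \<open>Adjoint of the composition operator C_phi: the push-forward of a signed measure.\<close>
definition comp_adj :: "('a \<Rightarrow> 'a) \<Rightarrow> ('a set \<Rightarrow> real) \<Rightarrow> 'a set \<Rightarrow> real" where
  "comp_adj \<phi> \<nu> = (\<lambda>E. \<nu> (\<phi> -` E))"

text \<open>M_g^* applied to the signed measure M1 - M2: the measure g d(M1 - M2).\<close>
definition mult_adj :: "('a::topological_space \<Rightarrow> real) \<Rightarrow> 'a measure \<Rightarrow> 'a measure \<Rightarrow> 'a set \<Rightarrow> real" where
  "mult_adj g M1 M2 = (\<lambda>E. (LINT x:E|M1. g x) - (LINT x:E|M2. g x))"

text \<open>Total variation norm (the dual norm on C(K)^*).\<close>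
definition tv_norm :: "('a::topological_space set \<Rightarrow> real) \<Rightarrow> real" where
  "tv_norm \<nu> = (SUP P\<in>{P. finite P \<and> disjoint P \<and> P \<subseteq> sets borel}. \<Sum>E\<in>P. \<bar>\<nu> E\<bar>)"

definition adj_range :: "('a::topological_space \<Rightarrow> 'a) \<Rightarrow> ('a \<Rightarrow> real) \<Rightarrow> ('a set \<Rightarrow> real) set" where
  "adj_range \<phi> g = {(\<lambda>E. comp_adj \<phi> (signed_of M1 M2) E + mult_adj g M1 M2 E) | M1 M2.
                      regular_measure M1 \<and> regular_measure M2}"

definition tv_separable :: "('a::topological_space set \<Rightarrow> real) set \<Rightarrow> bool" where
  "tv_separable R \<longleftrightarrow> (\<exists>D. countable D \<and> D \<subseteq> R \<and>
     (\<forall>r\<in>R. \<forall>e>0. \<exists>d\<in>D. tv_norm (\<lambda>E. r E - d E) < e))"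

end

theory Submission imports Defs "HOL-Probability.Giry_Monad" begin

text \<open>Point masses \<open>\<delta>\<^sub>a\<close>, \<open>a \<in> A\<close>, are sent by \<open>T\<^sup>* + M\<^sub>g\<^sup>*\<close> to \<open>\<delta>\<^bsub>\<phi> a\<^esub> + g(a) \<delta>\<^sub>a\<close>.
  Since \<open>\<phi>\<close> is injective on \<open>A\<close> and \<open>\<phi>(A)\<close> misses \<open>A\<close>, two distinct such images differ by \<open>1\<close>
  on the singleton \<open>{\<phi> a}\<close>, so they are at total variation distance at least \<open>1\<close>. An uncountable
  \<open>1\<close>-separated subset rules out a countable dense subset.\<close>

definition variation_bounded :: "('a::topological_space set \<Rightarrow> real) \<Rightarrow> bool" where
  "variation_bounded \<nu> \<longleftrightarrow>
     (\<exists>C. \<forall>P. finite P \<and> disjoint P \<and> P \<subseteq> sets borel \<longrightarrow> (\<Sum>E\<in>P. \<bar>\<nu> E\<bar>) \<le> C)"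

lemma abs_le_tv_norm:
  assumes "variation_bounded \<nu>" and "E \<in> sets borel"
  shows "\<bar>\<nu> E\<bar> \<le> tv_norm \<nu>"
proof -
  have "(\<Sum>E\<in>{E}. \<bar>\<nu> E\<bar>) \<le> (SUP P\<in>{P. finite P \<and> disjoint P \<and> P \<subseteq> sets borel}. \<Sum>E\<in>P. \<bar>\<nu> E\<bar>)"
    using assms by (intro cSUP_upper) (auto simp: variation_bounded_def bdd_above_def)
  then show ?thesis unfolding tv_norm_def by simp
qed

lemma variation_bounded_diff:
  assumes "variation_bounded \<mu>" and "variation_bounded \<nu>"
  shows "variation_bounded (\<lambda>E. \<mu> E - \<nu> E)"
proof -
  obtain C C' where
    C: "\<And>P. finite P \<and> disjoint P \<and> P \<subseteq> sets borel \<Longrightarrow> (\<Sum>E\<in>P. \<bar>\<mu> E\<bar>) \<le> C" and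
    C': "\<And>P. finite P \<and> disjoint P \<and> P \<subseteq> sets borel \<Longrightarrow> (\<Sum>E\<in>P. \<bar>\<nu> E\<bar>) \<le> C'"
    using assms unfolding variation_bounded_def by blast
  have "(\<Sum>E\<in>P. \<bar>\<mu> E - \<nu> E\<bar>) \<le> C + C'" if "finite P \<and> disjoint P \<and> P \<subseteq> sets borel" for P
  proof -
    have "(\<Sum>E\<in>P. \<bar>\<mu> E - \<nu> E\<bar>) \<le> (\<Sum>E\<in>P. \<bar>\<mu> E\<bar>) + (\<Sum>E\<in>P. \<bar>\<nu> E\<bar>)"
      unfolding sum.distrib[symmetric] by (intro sum_mono) auto
    also have "\<dots> \<le> C + C'" using C C' that by (intro add_mono)
    finally show ?thesis .
  qed
  then show ?thesis unfolding variation_bounded_def by blast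
qed

lemma abs_set_integral_le_measure:
  fixes g :: "'a \<Rightarrow> real"
  assumes "finite_measure M" "E \<in> sets M" "g \<in> borel_measurable M" "\<And>x. \<bar>g x\<bar> \<le> B"
  shows "\<bar>LINT x:E|M. g x\<bar> \<le> B * measure M E"
proof -
  interpret finite_measure M by fact
  have "0 \<le> B" using assms(4) abs_ge_zero order_trans by blast
  have int_g: "integrable M (\<lambda>x. indicator E x * g x)"
    by (rule integrable_const_bound[where B=B]) (use assms \<open>0 \<le> B\<close> in \<open>auto simp: indicator_def\<close>)
  have int_B: "integrable M (\<lambda>x. B * indicator E x)"
    using assms by (intro integrable_mult_right) (simp add: integrable_indicator_iff less_top[symmetric])
  have "\<bar>LINT x:E|M. g x\<bar> \<le> (\<integral>x. \<bar>indicator E x * g x\<bar> \<partial>M)"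
    unfolding set_lebesgue_integral_def by (simp add: integral_abs_bound)
  also have "\<dots> \<le> (\<integral>x. B * indicator E x \<partial>M)"
    using int_g int_B assms(4) by (intro integral_mono) (auto simp: indicator_def)
  also have "\<dots> = B * measure M E"
    using assms by simp
  finally show ?thesis .
qed

lemma sum_measure_disjoint_le_total:
  assumes "finite_measure M" "sets M = sets borel" "finite P"
    and "disjoint_family_on f P" "f ` P \<subseteq> sets borel"
  shows "(\<Sum>E\<in>P. measure M (f E)) \<le> measure M UNIV"
proof -
  interpret finite_measure M by fact
  have "(\<Sum>E\<in>P. measure M (f E)) = measure M (\<Union>E\<in>P. f E)"
    using assms by (intro finite_measure_finite_Union[symmetric]) auto
  also have "\<dots> \<le> measure M (space M)" by (rule bounded_measure)
  finally show ?thesis using sets_eq_imp_space_eq[OF assms(2)] by simp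
qed

lemma variation_bounded_adj_range:
  fixes \<phi> :: "'a::topological_space \<Rightarrow> 'a"
  assumes \<phi>: "\<phi> \<in> borel_measurable borel" and g: "g \<in> borel_measurable borel"
    and g_bound: "\<And>x. \<bar>g x\<bar> \<le> B" and \<nu>: "\<nu> \<in> adj_range \<phi> g"
  shows "variation_bounded \<nu>"
proof -
  obtain M1 M2 where \<nu>_eq: "\<nu> = (\<lambda>E. comp_adj \<phi> (signed_of M1 M2) E + mult_adj g M1 M2 E)"
    and "regular_measure M1" "regular_measure M2"
    using \<nu> unfolding adj_range_def by blast
  then have sets1: "sets M1 = sets borel" and fin1: "finite_measure M1"
    and sets2: "sets M2 = sets borel" and fin2: "finite_measure M2"
    unfolding regular_measure_def by blast+
  have "0 \<le> B" using g_bound abs_ge_zero order_trans by blast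
  have preimage: "\<phi> -` E \<in> sets borel" if "E \<in> sets borel" for E
    using measurable_sets[OF \<phi> that] by simp
  have pointwise: "\<bar>\<nu> E\<bar> \<le> measure M1 (\<phi> -` E) + measure M2 (\<phi> -` E) + B * measure M1 E + B * measure M2 E"
    if "E \<in> sets borel" for E
  proof -
    have "\<bar>LINT x:E|M1. g x\<bar> \<le> B * measure M1 E" "\<bar>LINT x:E|M2. g x\<bar> \<le> B * measure M2 E"
      using abs_set_integral_le_measure[OF fin1 _ _ g_bound] abs_set_integral_le_measure[OF fin2 _ _ g_bound]
        that g sets1 sets2 measurable_cong_sets by auto
    then show ?thesis unfolding \<nu>_eq comp_adj_def signed_of_def mult_adj_def
      by (smt (verit) measure_nonneg)
  qed
  have "(\<Sum>E\<in>P. \<bar>\<nu> E\<bar>) \<le> measure M1 UNIV + measure M2 UNIV + B * measure M1 UNIV + B * measure M2 UNIV"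
    if P: "finite P \<and> disjoint P \<and> P \<subseteq> sets borel" for P
  proof -
    have disj: "disjoint_family_on (\<lambda>E. E) P" "disjoint_family_on (\<lambda>E. \<phi> -` E) P"
      using P unfolding disjoint_family_on_def pairwise_def disjnt_def by auto
    have borel: "(\<lambda>E. E) ` P \<subseteq> sets borel" "(\<lambda>E. \<phi> -` E) ` P \<subseteq> sets borel"
      using P preimage by auto
    note total = sum_measure_disjoint_le_total[OF _ _ _ disj(1) borel(1)]
      sum_measure_disjoint_le_total[OF _ _ _ disj(2) borel(2)]
    have "(\<Sum>E\<in>P. \<bar>\<nu> E\<bar>) \<le> (\<Sum>E\<in>P. measure M1 (\<phi> -` E)) + (\<Sum>E\<in>P. measure M2 (\<phi> -` E))
        + B * (\<Sum>E\<in>P. measure M1 E) + B * (\<Sum>E\<in>P. measure M2 E)"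
    proof -
      have "(\<Sum>E\<in>P. \<bar>\<nu> E\<bar>) \<le> (\<Sum>E\<in>P. measure M1 (\<phi> -` E) + measure M2 (\<phi> -` E)
          + B * measure M1 E + B * measure M2 E)"
        using P pointwise by (intro sum_mono) auto
      then show ?thesis by (simp add: sum.distrib sum_distrib_left)
    qed
    also have "\<dots> \<le> measure M1 UNIV + measure M2 UNIV + B * measure M1 UNIV + B * measure M2 UNIV"
      using total[OF fin1 sets1] total[OF fin2 sets2] P \<open>0 \<le> B\<close>
      by (intro add_mono mult_left_mono) auto
    finally show ?thesis .
  qed
  then show ?thesis unfolding variation_bounded_def by blast
qed

lemma regular_measure_return: "regular_measure (return borel (a::'a::t2_space))"
  unfolding regular_measure_def
proof (intro conjI ballI)
  show "sets (return borel a) = sets borel" by simp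
  show "finite_measure (return borel a)"
    by (rule prob_space.finite_measure) (rule prob_space_return, simp)
next
  fix E :: "'a set" assume E: "E \<in> sets borel"
  show "emeasure (return borel a) E = (INF U\<in>{U. open U \<and> E \<subseteq> U}. emeasure (return borel a) U)"
  proof (cases "a \<in> E")
    case True
    then have "(INF U\<in>{U. open U \<and> E \<subseteq> U}. emeasure (return borel a) U) = (INF U\<in>{U. open U \<and> E \<subseteq> U}. 1)"
      by (intro INF_cong) auto
    also have "\<dots> = 1" by (rule INF_const) auto
    finally show ?thesis using True E by simp
  next
    case False
    then have "(INF U\<in>{U. open U \<and> E \<subseteq> U}. emeasure (return borel a) U) \<le> emeasure (return borel a) (-{a})"
      by (intro INF_lower) (auto simp: open_Compl)
    then show ?thesis using False E by simp
  qed
  show "emeasure (return borel a) E = (SUP C\<in>{C. compact C \<and> C \<subseteq> E}. emeasure (return borel a) C)"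
  proof (cases "a \<in> E")
    case True
    have "1 \<le> (SUP C\<in>{C. compact C \<and> C \<subseteq> E}. emeasure (return borel a) C)"
      using True by (intro SUP_upper2[of "{a}"]) (auto simp: compact_imp_closed)
    moreover have "(SUP C\<in>{C. compact C \<and> C \<subseteq> E}. emeasure (return borel a) C) \<le> 1"
      by (intro SUP_least) (auto simp: compact_imp_closed indicator_def)
    ultimately show ?thesis using True E by (simp add: antisym)
  next
    case False
    then have "(SUP C\<in>{C. compact C \<and> C \<subseteq> E}. emeasure (return borel a) C) = (SUP C\<in>{C. compact C \<and> C \<subseteq> E}. 0)"
      by (intro SUP_cong) (auto simp: compact_imp_closed indicator_def)
    also have "\<dots> = 0" by (rule SUP_const) auto
    finally show ?thesis using False E by simp
  qed
qed

lemma regular_measure_null: "regular_measure (null_measure (borel::'a::topological_space measure))"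
  unfolding regular_measure_def
proof (intro conjI ballI)
  show "finite_measure (null_measure (borel::'a measure))"
    by (rule finite_measureI) simp
  fix E :: "'a set"
  have "{U. open U \<and> E \<subseteq> U} \<noteq> {}" "{C. compact C \<and> C \<subseteq> E} \<noteq> {}"
    by (auto intro: exI[of _ "{}"])
  then show "emeasure (null_measure borel) E = (INF U\<in>{U. open U \<and> E \<subseteq> U}. emeasure (null_measure borel) U)"
    and "emeasure (null_measure borel) E = (SUP C\<in>{C. compact C \<and> C \<subseteq> E}. emeasure (null_measure borel) C)"
    by simp_all
qed simp

lemma point_mass_image_in_adj_range:
  fixes \<phi> :: "'a::t2_space \<Rightarrow> 'a" and g :: "'a \<Rightarrow> real"
  assumes \<phi>: "\<phi> \<in> borel_measurable borel" and g: "g \<in> borel_measurable borel"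
  shows "\<exists>\<nu>\<in>adj_range \<phi> g. \<forall>E\<in>sets borel. \<nu> E = indicator E (\<phi> a) + indicator E a * g a"
proof (intro bexI ballI)
  let ?\<delta> = "return borel a" and ?null = "null_measure (borel :: 'a measure)"
  show "(\<lambda>E. comp_adj \<phi> (signed_of ?\<delta> ?null) E + mult_adj g ?\<delta> ?null E) \<in> adj_range \<phi> g"
    unfolding adj_range_def using regular_measure_return regular_measure_null by blast
  fix E :: "'a set" assume E: "E \<in> sets borel"
  have "(\<lambda>x. indicator E x *\<^sub>R g x) \<in> borel_measurable borel" using E g by measurable
  then have "(LINT x:E|?\<delta>. g x) = indicator E a * g a"
    unfolding set_lebesgue_integral_def by (simp add: integral_return)
  moreover have "measure ?\<delta> (\<phi> -` E) = indicator E (\<phi> a)"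
    using measurable_sets[OF \<phi> E] by (simp add: measure_return indicator_def)
  ultimately show "comp_adj \<phi> (signed_of ?\<delta> ?null) E + mult_adj g ?\<delta> ?null E = indicator E (\<phi> a) + indicator E a * g a"
    unfolding comp_adj_def signed_of_def mult_adj_def by (simp add: set_lebesgue_integral_def)
qed

lemma not_tv_separable_if_uncountable_separated:
  assumes bounded: "\<forall>\<nu>\<in>R. variation_bounded \<nu>" and "uncountable A" and in_R: "\<forall>a\<in>A. \<mu> a \<in> R"
    and separated: "\<forall>a\<in>A. \<forall>b\<in>A. a \<noteq> b \<longrightarrow> (\<exists>E\<in>sets borel. 1 \<le> \<bar>\<mu> a E - \<mu> b E\<bar>)"
  shows "\<not> tv_separable R"
proof
  assume "tv_separable R"
  then obtain D where D: "countable D" "D \<subseteq> R"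
    and dense: "\<forall>\<nu>\<in>R. \<forall>e>0. \<exists>d\<in>D. tv_norm (\<lambda>E. \<nu> E - d E) < e"
    unfolding tv_separable_def by blast
  have "\<forall>a\<in>A. \<exists>d. d \<in> D \<and> tv_norm (\<lambda>E. \<mu> a E - d E) < 1/2"
    using dense in_R by (meson field_sum_of_halves half_gt_zero_iff zero_less_one)
  then have "\<exists>f. \<forall>a\<in>A. f a \<in> D \<and> tv_norm (\<lambda>E. \<mu> a E - f a E) < 1/2"
    by (rule bchoice)
  then obtain f where f: "\<And>a. a \<in> A \<Longrightarrow> f a \<in> D \<and> tv_norm (\<lambda>E. \<mu> a E - f a E) < 1/2"
    by blast
  have "countable (f ` A)"
    using f D(1) by (meson countable_subset image_subsetI)
  then have "\<not> inj_on f A"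
    using \<open>uncountable A\<close> countable_image_inj_on by blast
  then obtain a b where ab: "a \<in> A" "b \<in> A" "a \<noteq> b" "f a = f b"
    unfolding inj_on_def by blast
  obtain E where E: "E \<in> sets borel" "1 \<le> \<bar>\<mu> a E - \<mu> b E\<bar>"
    using separated ab by blast
  have close: "\<bar>\<mu> c E - f a E\<bar> < 1/2" if "c \<in> A" "f c = f a" for c
  proof -
    have "variation_bounded (\<lambda>E. \<mu> c E - f a E)"
      using bounded in_R D(2) f ab(1) that(1) by (intro variation_bounded_diff) auto
    then have "\<bar>\<mu> c E - f a E\<bar> \<le> tv_norm (\<lambda>E. \<mu> c E - f a E)"
      using abs_le_tv_norm E(1) by blast
    also have "\<dots> < 1/2" using f[OF that(1)] that(2) by simp
    finally show ?thesis .
  qed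
  show False using close[OF ab(1) refl] close[OF ab(2) ab(4)[symmetric]] E(2) by linarith
qed

theorem lemma4:
  fixes \<phi> :: "'a::t2_space \<Rightarrow> 'a" and A :: "'a set"
  assumes "compact (UNIV :: 'a set)"
    and "continuous_on UNIV \<phi>"
    and "uncountable A" and "inj_on \<phi> A" and "\<phi> ` A \<inter> A = {}"
  shows "\<forall>g :: 'a \<Rightarrow> real. g \<in> borel_measurable borel \<and> bounded (range g) \<longrightarrow>
           \<not> tv_separable (adj_range \<phi> g)"
proof (intro allI impI)
  fix g :: "'a \<Rightarrow> real"
  assume g: "g \<in> borel_measurable borel \<and> bounded (range g)"
  then obtain B where B: "\<And>x. \<bar>g x\<bar> \<le> B" unfolding bounded_iff by auto
  have \<phi>: "\<phi> \<in> borel_measurable borel"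
    using assms(2) by (rule borel_measurable_continuous_onI)
  have "\<forall>a. \<exists>\<nu>. \<nu> \<in> adj_range \<phi> g \<and> (\<forall>E\<in>sets borel. \<nu> E = indicator E (\<phi> a) + indicator E a * g a)"
    using point_mass_image_in_adj_range[OF \<phi>] g by blast
  then have "\<exists>\<mu>. \<forall>a. \<mu> a \<in> adj_range \<phi> g \<and>
      (\<forall>E\<in>sets borel. \<mu> a E = indicator E (\<phi> a) + indicator E a * g a)"
    by (rule choice)
  then obtain \<mu> where \<mu>: "\<And>a. \<mu> a \<in> adj_range \<phi> g"
    "\<And>a E. E \<in> sets borel \<Longrightarrow> \<mu> a E = indicator E (\<phi> a) + indicator E a * g a"
    by blast
  have separated: "\<exists>E\<in>sets borel. 1 \<le> \<bar>\<mu> a E - \<mu> b E\<bar>" if "a \<in> A" "b \<in> A" "a \<noteq> b" for a b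
  proof
    have "\<phi> a \<noteq> a" "\<phi> a \<noteq> b" "\<phi> b \<noteq> \<phi> a" using assms(4,5) that by (auto simp: inj_on_def)
    then show "1 \<le> \<bar>\<mu> a {\<phi> a} - \<mu> b {\<phi> a}\<bar>" using \<mu>(2) by simp
  qed simp
  have "\<forall>\<nu>\<in>adj_range \<phi> g. variation_bounded \<nu>"
    using variation_bounded_adj_range[of \<phi> g B] \<phi> g B by blast
  then show "\<not> tv_separable (adj_range \<phi> g)"
    using \<mu>(1) separated by (intro not_tv_separable_if_uncountable_separated[where \<mu>=\<mu>, OF _ assms(3)]) auto
qed

end
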